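(* Let $\Sigma\subset(0,\infty)$ be an unbounded set of parameters $\sigma$, and for each $\sigma\in\Sigma$ let $N_\sigma$ be a positive integer and $\mu_\sigma\in(0,1)$ be such that $\sigma=\sqrt{N_\sigma\mu_\sigma(1-\mu_\sigma)}$. Put $E_\sigma=N_\sigma\mu_\sigma$, and for real $x$ put $m(\sigma,x)=E_\sigma-\sigma x$ and $n(\sigma,x)=N_\sigma-m(\sigma,x)$. Define (for $\sigma$ large enough) $$b(\sigma,x)=\frac{\Gamma(N_\sigma+1)}{\Gamma(n(\sigma,x)+1)\,\Gamma(m(\sigma,x)+1)}\,\mu_\sigma^{m(\sigma,x)}(1-\mu_\sigma)^{n(\sigma,x)}.$$ Assume that $E_\sigma=\sigma^2+1+O(1/\sigma^2)$ as $\sigma\to\infty$, and let $\alpha>0$ be fixed. Then on the intervals $I_\sigma=[-\sigma^{1-\alpha},\sigma^{1-\alpha}]$ we have $$b(\sigma,x)=\Big(\frac{1}{\sqrt{2\pi}}e^{-x^2/2}\Big)\frac{1}{\sigma}-\Big(\frac{1}{6\sqrt{2\pi}}x(x^2-3)e^{-x^2/2}\Big)\frac{1}{\sigma^2}+O\Big(\frac{1}{\sigma^3}\Big),$$ where the $O$ is uniform in $x\in I_\sigma$: there exist $C>0$ and $\sigma_0$ such that the absolute value of the difference between $b(\sigma,x)$ and the two main terms is at most $C/\sigma^3$ for all $\sigma\in\Sigma$ with $\sigma>\sigma_0$ and all $x\in I_\sigma$.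
   Context: Here $b(\sigma,\cdot)$ is the continuous interpolation of the binomial mass function: when $m(\sigma,x)$ is an integer, $b(\sigma,x)$ equals the probability that a binomial random variable with $N_\sigma$ trials and success probability $\mu_\sigma$ takes the value $m(\sigma,x)$. *)

theory Defs
  imports "HOL-Analysis.Analysis"
begin

definition bin_interp :: "nat \<Rightarrow> real \<Rightarrow> real \<Rightarrow> real \<Rightarrow> real" where
  "bin_interp N mu sg x =
     (let E = real N * mu; m = E - sg * x; n = real N - m in
      Gamma (real N + 1) / (Gamma (n + 1) * Gamma (m + 1)) * mu powr m * (1 - mu) powr n)"

end

theory Submission
  imports Defs "HOL-Real_Asymp.Real_Asymp"
begin

text \<open>
  Writing \<open>b(\<sigma>, x) = exp (ln \<Gamma>(N+1) - ln \<Gamma>(n+1) - ln \<Gamma>(m+1) + m ln \<mu> + n ln (1-\<mu>))\<close>, Stirling's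
  formula with the explicit error \<open>0 \<le> ln \<Gamma>(z+1) - ((z+1/2) ln z - z + ln (2\<pi>)/2) \<le> 1/(12z)\<close>
  (proved by telescoping, the constant being identified through Legendre's duplication formula)
  turns the exponent into \<open>-ln \<surd>(2\<pi>) - ln \<sigma> - (m+1/2) ln (1-a) - (n+1/2) ln (1+t)\<close>, where
  \<open>m = N\<mu>(1-a)\<close>, \<open>n = N(1-\<mu>)(1+t)\<close> and \<open>a, t = O(x/\<sigma>)\<close>. The hypothesis \<open>E = \<sigma>\<^sup>2 + 1 + O(1/\<sigma>\<^sup>2)\<close>
  forces \<open>\<mu> \<le> 2/\<sigma>\<^sup>2\<close>, and then third-order Taylor expansion of the logarithms gives the exponent
  \<open>-x\<^sup>2/2 + x/(2\<sigma>) - x\<^sup>3/(6\<sigma>) + O((1+x\<^sup>2)\<^sup>2/\<sigma>\<^sup>2)\<close>, uniformly for \<open>|x| \<le> \<sigma>/32\<close>. After exponentiating,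
  the error of linearising \<open>exp\<close> grows at most like \<open>(1+x\<^sup>2)\<^sup>4 exp (x\<^sup>2/4) / \<sigma>\<^sup>2\<close>, which the Gaussian
  factor \<open>exp (-x\<^sup>2/2) / \<sigma>\<close> absorbs.
\<close>

section \<open>Stirling's formula with explicit error\<close>

lemma ln_one_plus_minus_ln_one_minus_lower:
  fixes t :: real
  assumes "0 \<le> t" "t < 1"
  shows "2 * t \<le> ln (1 + t) - ln (1 - t)"
proof -
  let ?f = "\<lambda>u::real. ln (1 + u) - ln (1 - u) - 2 * u"
  have "?f 0 \<le> ?f t"
  proof (rule DERIV_nonneg_imp_nondecreasing[OF assms(1)])
    fix u assume u: "0 \<le> u" "u \<le> t"
    then have "u * u < 1"
      using assms mult_left_le_one_le[of u u] by linarith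
    then have "1 / (1 + u) + 1 / (1 - u) - 2 = 2 * u\<^sup>2 / ((1 + u) * (1 - u))"
      using u assms by (simp add: field_simps power2_eq_square)
    moreover have "DERIV ?f u :> 1 / (1 + u) + 1 / (1 - u) - 2"
      using u assms by (auto intro!: derivative_eq_intros)
    ultimately show "\<exists>y. DERIV ?f u :> y \<and> y \<ge> 0"
      using u assms by fastforce
  qed
  then show ?thesis by simp
qed

lemma ln_one_plus_minus_ln_one_minus_upper:
  fixes t :: real
  assumes "0 \<le> t" "t < 1"
  shows "ln (1 + t) - ln (1 - t) \<le> 2 * t + 2 * t ^ 3 / (3 * (1 - t\<^sup>2))"
proof -
  let ?f = "\<lambda>u::real. 2 * u + 2 * u ^ 3 / (3 * (1 - u\<^sup>2)) - (ln (1 + u) - ln (1 - u))"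
  have "?f 0 \<le> ?f t"
  proof (rule DERIV_nonneg_imp_nondecreasing[OF assms(1)])
    fix u assume u: "0 \<le> u" "u \<le> t"
    then have "u * u < 1"
      using assms mult_left_le_one_le[of u u] by linarith
    then have nz: "1 - u \<noteq> 0" "1 + u \<noteq> 0" "1 - u\<^sup>2 \<noteq> 0"
      using u by (auto simp: power2_eq_square)
    have "2 + (2 * (3 * u\<^sup>2) * (3 * (1 - u\<^sup>2)) - 2 * u ^ 3 * (3 * (0 - 2 * u)))
              / (3 * (1 - u\<^sup>2))\<^sup>2 - (1 / (1 + u) - (- 1) / (1 - u))
          = 4 * u ^ 4 / (3 * (1 - u\<^sup>2)\<^sup>2)" (is "?d = _")
    proof -
      \<comment> \<open>keep \<open>1 - u\<close> and \<open>1 + u\<close> opaque, or the simplifier multiplies them out before clearing denominators\<close>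
      have "2 + (2 * (3 * u\<^sup>2) * (3 * (p * q)) - 2 * u ^ 3 * (3 * (0 - 2 * u))) / (3 * (p * q))\<^sup>2
              - (1 / q - (- 1) / p) = 4 * u ^ 4 / (3 * (p * q)\<^sup>2)"
        if "p = 1 - u" "q = 1 + u" "p \<noteq> 0" "q \<noteq> 0" for p q
        using that(3,4) by (simp add: field_simps)
          (simp add: that(1,2) algebra_simps power2_eq_square power3_eq_cube power4_eq_xxxx)
      moreover have "1 - u\<^sup>2 = (1 - u) * (1 + u)"
        by (simp add: algebra_simps power2_eq_square)
      ultimately show ?thesis
        using nz by presburger
    qed
    moreover have "DERIV ?f u :> ?d"
      using u assms nz by (auto intro!: derivative_eq_intros simp: power2_eq_square)
    ultimately have "DERIV ?f u :> 4 * u ^ 4 / (3 * (1 - u\<^sup>2)\<^sup>2)"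
      by simp
    then show "\<exists>y. DERIV ?f u :> y \<and> y \<ge> 0" by fastforce
  qed
  then show ?thesis by simp
qed

lemma stirling_increment_bounds:
  fixes z :: real
  assumes z: "z > 0"
  shows "0 \<le> (z + 1/2) * ln (1 + 1/z) - 1"
    and "(z + 1/2) * ln (1 + 1/z) - 1 \<le> 1 / (12 * z) - 1 / (12 * (z + 1))"
proof -
  define t where "t = 1 / (2 * z + 1)"
  have t: "0 < t" "t < 1"
    using z by (auto simp: t_def field_simps)
  have t_eqs: "1 - t = 2 * z * t" "1 + t = (2 * z + 2) * t"
    using z by (simp_all add: t_def field_simps)
  then have "1 + 1/z = (1 + t) / (1 - t)"
    using z t by (simp add: field_simps)
  then have "ln (1 + 1/z) = ln (1 + t) - ln (1 - t)"
    using t by (simp add: ln_div)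
  moreover have "z + 1/2 = 1 / (2 * t)"
    using z by (simp add: t_def field_simps)
  ultimately have lhs: "(z + 1/2) * ln (1 + 1/z) = (ln (1 + t) - ln (1 - t)) / (2 * t)"
    by simp
  have lower: "2 * t \<le> ln (1 + t) - ln (1 - t)"
    using ln_one_plus_minus_ln_one_minus_lower t by simp
  have upper: "ln (1 + t) - ln (1 - t) \<le> 2 * t + 2 * t ^ 3 / (3 * (1 - t\<^sup>2))"
    using ln_one_plus_minus_ln_one_minus_upper t by simp
  have upper_eq: "(2 * t + 2 * t ^ 3 / (3 * (1 - t\<^sup>2))) / (2 * t)
                   = 1 + (1 / (12 * z) - 1 / (12 * (z + 1)))"
  proof -
    have "1 - t\<^sup>2 = (1 - t) * (1 + t)"
      by (simp add: algebra_simps power2_eq_square)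
    also have "\<dots> = 4 * z * (z + 1) * t\<^sup>2"
      unfolding t_eqs by (simp add: algebra_simps power2_eq_square)
    finally have one_minus_t2: "1 - t\<^sup>2 = 4 * z * (z + 1) * t\<^sup>2" .
    have "(2 * t + 2 * t ^ 3 / (3 * (1 - t\<^sup>2))) / (2 * t) = 1 + t\<^sup>2 / (3 * (1 - t\<^sup>2))"
      using t by (simp add: field_simps power2_eq_square power3_eq_cube)
    also have "t\<^sup>2 / (3 * (1 - t\<^sup>2)) = 1 / (12 * z) - 1 / (12 * (z + 1))"
      unfolding one_minus_t2 using z t by (simp add: divide_simps)
    finally show ?thesis .
  qed
  show "0 \<le> (z + 1/2) * ln (1 + 1/z) - 1"
    unfolding lhs using lower t by (simp add: le_divide_eq)
  have "(ln (1 + t) - ln (1 - t)) / (2 * t) \<le> (2 * t + 2 * t ^ 3 / (3 * (1 - t\<^sup>2))) / (2 * t)"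
    using upper t by (simp add: divide_right_mono)
  then show "(z + 1/2) * ln (1 + 1/z) - 1 \<le> 1 / (12 * z) - 1 / (12 * (z + 1))"
    unfolding lhs upper_eq by simp
qed

definition stirling_defect :: "real \<Rightarrow> real" where
  "stirling_defect z = ln (Gamma z) - (z - 1/2) * ln z + z"

lemma ln_Gamma_plus1_real:
  fixes z :: real
  assumes "z > 0"
  shows "ln (Gamma (z + 1)) = ln z + ln (Gamma z)"
proof -
  have "z \<notin> \<int>\<^sub>\<le>\<^sub>0"
    using assms by (auto elim!: nonpos_Ints_cases)
  then show ?thesis
    using assms by (simp add: Gamma_plus1 Gamma_eq_zero_iff ln_mult)
qed

lemma stirling_defect_step:
  fixes z :: real
  assumes "z > 0"
  shows "stirling_defect z - stirling_defect (z + 1) = (z + 1/2) * ln (1 + 1/z) - 1"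
proof -
  have "ln (1 + 1/z) = ln (z + 1) - ln z"
    using assms by (simp add: field_simps ln_div)
  then show ?thesis
    unfolding stirling_defect_def ln_Gamma_plus1_real[OF assms] by algebra
qed

lemma stirling_defect_telescope:
  fixes z :: real
  assumes "z > 0"
  shows "0 \<le> stirling_defect z - stirling_defect (z + real k)"
    and "stirling_defect z - stirling_defect (z + real k) \<le> 1 / (12 * z) - 1 / (12 * (z + real k))"
proof (induction k)
  case (Suc k)
  have "z + real k > 0"
    using assms by simp
  from stirling_defect_step[OF this] stirling_increment_bounds[OF this] Suc.IH
  show "0 \<le> stirling_defect z - stirling_defect (z + real (Suc k))"
    and "stirling_defect z - stirling_defect (z + real (Suc k)) \<le> 1 / (12 * z) - 1 / (12 * (z + real (Suc k)))"
    by (simp_all add: algebra_simps)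
qed simp_all

lemma stirling_defect_limit_bounds:
  fixes z :: real
  assumes z: "z > 0"
  obtains L where "(\<lambda>k. stirling_defect (z + real k)) \<longlonglongrightarrow> L"
    and "stirling_defect z - 1 / (12 * z) \<le> L" and "L \<le> stirling_defect z"
proof -
  have lower: "stirling_defect z - 1 / (12 * z) \<le> stirling_defect (z + real k)" for k
  proof -
    have "0 \<le> 1 / (12 * (z + real k))"
      using z by simp
    with stirling_defect_telescope(2)[OF z, of k] show ?thesis
      by linarith
  qed
  have "decseq (\<lambda>k. stirling_defect (z + real k))"
  proof (rule decseq_SucI)
    fix k
    have "z + real k > 0"
      using z by simp
    from stirling_defect_step[OF this] stirling_increment_bounds(1)[OF this]
    have "stirling_defect (z + real k + 1) \<le> stirling_defect (z + real k)"
      by linarith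
    then show "stirling_defect (z + real (Suc k)) \<le> stirling_defect (z + real k)"
      by (simp add: ac_simps)
  qed
  with lower obtain L where L: "(\<lambda>k. stirling_defect (z + real k)) \<longlonglongrightarrow> L"
    and "\<And>k. L \<le> stirling_defect (z + real k)"
    using decseq_convergent by blast
  moreover have "stirling_defect z - 1 / (12 * z) \<le> L"
    using lower by (intro LIMSEQ_le_const[OF L]) auto
  ultimately show ?thesis
    using that[of L] by (metis add_0_right of_nat_0)
qed

lemma ln_Gamma_ratio_tendsto_0:
  fixes z :: real
  assumes z: "z > 0"
  shows "(\<lambda>n. ln (fact n) + z * ln (real n) - ln (Gamma (z + real (Suc n)))) \<longlonglongrightarrow> 0"
proof -
  have nz: "z \<notin> \<int>\<^sub>\<le>\<^sub>0"
    using z by (auto elim!: nonpos_Ints_cases)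
  have "Gamma_series z n / Gamma z = fact n * exp (z * ln (real n)) / Gamma (z + real (Suc n))" for n
  proof -
    have "pochhammer z (n + 1) = Gamma (z + real (n + 1)) / Gamma z"
      using pochhammer_Gamma[OF nz] by simp
    moreover have "Gamma (z + real (Suc n)) > 0"
      using z by (intro Gamma_real_pos) simp
    ultimately show ?thesis
      unfolding Gamma_series_def using Gamma_real_pos[OF z] by (simp add: field_simps)
  qed
  moreover have "(\<lambda>n. Gamma_series z n / Gamma z) \<longlonglongrightarrow> Gamma z / Gamma z"
    by (intro tendsto_intros Gamma_series_LIMSEQ) (use Gamma_real_pos[OF z] in simp)
  ultimately have "(\<lambda>n. fact n * exp (z * ln (real n)) / Gamma (z + real (Suc n))) \<longlonglongrightarrow> 1"
    using Gamma_real_pos[OF z] by simp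
  then have "(\<lambda>n. ln (fact n * exp (z * ln (real n)) / Gamma (z + real (Suc n)))) \<longlonglongrightarrow> ln 1"
    by (rule tendsto_ln) simp
  moreover have "ln (fact n * exp (z * ln (real n)) / Gamma (z + real (Suc n)))
                   = ln (fact n) + z * ln (real n) - ln (Gamma (z + real (Suc n)))" for n
    using z by (auto simp: ln_div ln_mult Gamma_eq_zero_iff elim!: nonpos_Ints_cases)
  ultimately show ?thesis
    by simp
qed

lemma stirling_defect_shift_tendsto_0:
  fixes z :: real
  assumes z: "z > 0"
  shows "(\<lambda>n. stirling_defect (z + real (Suc n)) - stirling_defect (1 + real n)) \<longlonglongrightarrow> 0"
proof -
  have "(\<lambda>n::nat. z * ln (real n) - (z + real n + 1/2) * ln (z + real n + 1)
                  + (real n + 1/2) * ln (real n + 1) + z) \<longlonglongrightarrow> 0"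
    using z by real_asymp
  then have "(\<lambda>n. (z * ln (real n) - (z + real n + 1/2) * ln (z + real n + 1)
                   + (real n + 1/2) * ln (real n + 1) + z)
               - (ln (fact n) + z * ln (real n) - ln (Gamma (z + real (Suc n))))) \<longlonglongrightarrow> 0 - 0"
    by (intro tendsto_diff ln_Gamma_ratio_tendsto_0[OF z])
  moreover have "ln (fact n) = ln (Gamma (1 + real n))" for n
    by (simp add: Gamma_fact)
  ultimately show ?thesis
    by (simp add: stirling_defect_def algebra_simps)
qed

lemma stirling_defect_limits_eq:
  fixes z :: real
  assumes "z > 0"
    and "(\<lambda>k. stirling_defect (z + real k)) \<longlonglongrightarrow> Lz"
    and "(\<lambda>k. stirling_defect (1 + real k)) \<longlonglongrightarrow> L1"
  shows "Lz = L1"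
proof -
  have "(\<lambda>n. stirling_defect (z + real (Suc n)) - stirling_defect (1 + real n)) \<longlonglongrightarrow> Lz - L1"
    by (intro tendsto_diff LIMSEQ_Suc assms(2,3))
  with stirling_defect_shift_tendsto_0[OF assms(1)] show ?thesis
    using LIMSEQ_unique by fastforce
qed

lemma Gamma_legendre_duplication_real:
  fixes z :: real
  assumes z: "z > 0"
  shows "Gamma z * Gamma (z + 1/2) = exp ((1 - 2 * z) * ln 2) * sqrt pi * Gamma (2 * z)"
proof -
  have "complex_of_real z \<notin> \<int>\<^sub>\<le>\<^sub>0" "complex_of_real z + 1/2 \<notin> \<int>\<^sub>\<le>\<^sub>0"
    using z by (auto elim!: nonpos_Ints_cases simp: complex_eq_iff)
  then have "Gamma (complex_of_real z) * Gamma (complex_of_real z + 1/2) =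
      exp ((1 - 2 * complex_of_real z) * of_real (ln 2)) * of_real (sqrt pi) * Gamma (2 * complex_of_real z)"
    by (rule Gamma_legendre_duplication)
  then have "complex_of_real (Gamma z * Gamma (z + 1/2))
               = complex_of_real (exp ((1 - 2 * z) * ln 2) * sqrt pi * Gamma (2 * z))"
    by (simp flip: Gamma_complex_of_real exp_of_real)
  then show ?thesis
    by (simp only: of_real_eq_iff)
qed

lemma stirling_defect_duplication:
  fixes z :: real
  assumes z: "z > 0"
  shows "stirling_defect z + stirling_defect (z + 1/2) - stirling_defect (2 * z)
           = ln 2 / 2 + ln pi / 2 + z * ln z - z * ln (z + 1/2) + 1/2"
proof -
  have "Gamma z > 0" "Gamma (z + 1/2) > 0" "Gamma (2 * z) > 0"
    using z by auto
  then have "ln (Gamma z) + ln (Gamma (z + 1/2)) = (1 - 2 * z) * ln 2 + ln pi / 2 + ln (Gamma (2 * z))"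
    using arg_cong[OF Gamma_legendre_duplication_real[OF z], of ln] by (simp add: ln_mult ln_sqrt)
  moreover have "ln (2 * z) = ln 2 + ln z"
    using z by (simp add: ln_mult)
  ultimately show ?thesis
    unfolding stirling_defect_def by (simp add: algebra_simps)
qed

text \<open>The common limit is identified along \<open>z = k + 1\<close>: by the duplication formula, the defects at
  \<open>k + 1\<close>, \<open>k + 3/2\<close> and \<open>2 k + 2\<close>, all tending to the same limit \<open>L\<close>, combine to
  \<open>ln 2 / 2 + ln pi / 2 + o(1)\<close>, so \<open>L = ln (2 * pi) / 2\<close>.\<close>

lemma stirling_defect_tendsto:
  fixes z :: real
  assumes z: "z > 0"
  shows "(\<lambda>k. stirling_defect (z + real k)) \<longlonglongrightarrow> ln (2 * pi) / 2"
proof -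
  obtain L where L: "(\<lambda>k. stirling_defect (1 + real k)) \<longlonglongrightarrow> L"
    using stirling_defect_limit_bounds[of 1] by auto
  obtain Lh where Lh: "(\<lambda>k. stirling_defect (1/2 + real k)) \<longlonglongrightarrow> Lh"
    using stirling_defect_limit_bounds[of "1/2"] by auto
  have "Lh = L"
    using stirling_defect_limits_eq[OF _ Lh L] by simp
  then have half: "(\<lambda>k. stirling_defect ((real k + 1) + 1/2)) \<longlonglongrightarrow> L"
    using LIMSEQ_Suc[OF Lh] by (simp add: ac_simps)
  have "strict_mono (\<lambda>k::nat. 2 * k + 1)"
    by (rule strict_monoI) simp
  from LIMSEQ_subseq_LIMSEQ[OF L this]
  have double: "(\<lambda>k. stirling_defect (2 * (real k + 1))) \<longlonglongrightarrow> L"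
    by (simp add: comp_def algebra_simps)
  have "(\<lambda>k. stirling_defect (real k + 1) + stirling_defect ((real k + 1) + 1/2)
               - stirling_defect (2 * (real k + 1))) \<longlonglongrightarrow> L + L - L"
    using L half double by (intro tendsto_intros) (simp_all add: ac_simps)
  moreover have "stirling_defect (real k + 1) + stirling_defect ((real k + 1) + 1/2)
                   - stirling_defect (2 * (real k + 1))
                 = ln 2 / 2 + ln pi / 2 + (real k + 1) * ln (real k + 1)
                   - (real k + 1) * ln (real k + 1 + 1/2) + 1/2" for k :: nat
    by (rule stirling_defect_duplication) simp
  ultimately have "(\<lambda>k::nat. ln 2 / 2 + ln pi / 2 + (real k + 1) * ln (real k + 1)
               - (real k + 1) * ln (real k + 1 + 1/2) + 1/2) \<longlonglongrightarrow> L"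
    by simp
  moreover have "(\<lambda>k::nat. ln 2 / 2 + ln pi / 2 + (real k + 1) * ln (real k + 1)
                   - (real k + 1) * ln (real k + 1 + 1/2) + 1/2) \<longlonglongrightarrow> ln 2 / 2 + ln pi / 2"
    by real_asymp
  ultimately have "L = ln 2 / 2 + ln pi / 2"
    by (rule LIMSEQ_unique)
  then have "L = ln (2 * pi) / 2"
    by (simp add: ln_mult)
  moreover obtain Lz where Lz: "(\<lambda>k. stirling_defect (z + real k)) \<longlonglongrightarrow> Lz"
    using stirling_defect_limit_bounds[OF z] by auto
  moreover have "Lz = L"
    using stirling_defect_limits_eq[OF z Lz L] .
  ultimately show ?thesis
    by metis
qed

definition stirling_error :: "real \<Rightarrow> real" where
  "stirling_error z = ln (Gamma (z + 1)) - ((z + 1/2) * ln z - z + ln (2 * pi) / 2)"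

theorem stirling_error_bounds:
  fixes z :: real
  assumes z: "z > 0"
  shows "0 \<le> stirling_error z" and "stirling_error z \<le> 1 / (12 * z)"
proof -
  obtain L where L: "(\<lambda>k. stirling_defect (z + real k)) \<longlonglongrightarrow> L"
    and bounds: "stirling_defect z - 1 / (12 * z) \<le> L" "L \<le> stirling_defect z"
    using stirling_defect_limit_bounds[OF z] by blast
  have "L = ln (2 * pi) / 2"
    using LIMSEQ_unique[OF L stirling_defect_tendsto[OF z]] .
  moreover have "stirling_error z = stirling_defect z - ln (2 * pi) / 2"
    unfolding stirling_error_def stirling_defect_def ln_Gamma_plus1_real[OF z] by (simp add: algebra_simps)
  ultimately show "0 \<le> stirling_error z" and "stirling_error z \<le> 1 / (12 * z)"
    using bounds by linarith+
qed

section \<open>Elementary Taylor estimates\<close>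

lemma ln_one_plus_maclaurin3:
  fixes u :: real
  assumes u: "\<bar>u\<bar> < 1"
  obtains t where "\<bar>t\<bar> \<le> \<bar>u\<bar>" and "ln (1 + u) = u - u\<^sup>2 / 2 + u ^ 3 / 3 - u ^ 4 / (4 * (1 + t) ^ 4)"
proof -
  define f :: "nat \<Rightarrow> real \<Rightarrow> real" where
    "f = (\<lambda>m t. if m = 0 then ln (1 + t) else if m = 1 then 1 / (1 + t)
               else if m = 2 then - 1 / (1 + t)\<^sup>2 else if m = 3 then 2 / (1 + t) ^ 3
               else - 6 / (1 + t) ^ 4)"
  have "\<forall>m t. m < 4 \<and> \<bar>t\<bar> \<le> \<bar>u\<bar> \<longrightarrow> DERIV (f m) t :> f (Suc m) t"
  proof (intro allI impI)
    fix m :: nat and t :: real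
    assume mt: "m < 4 \<and> \<bar>t\<bar> \<le> \<bar>u\<bar>"
    then have "1 + t > 0"
      using u by linarith
    then have nz: "1 + t \<noteq> 0"
      by simp
    from mt consider "m = 0" | "m = 1" | "m = 2" | "m = 3"
      by linarith
    then show "DERIV (f m) t :> f (Suc m) t"
    proof cases
      case 1
      then show ?thesis
        using \<open>1 + t > 0\<close> by (auto intro!: derivative_eq_intros simp: f_def)
    next
      case 2
      then show ?thesis
        using nz by (auto intro!: derivative_eq_intros simp: f_def field_simps)
          (simp add: power2_eq_square power3_eq_cube power4_eq_xxxx algebra_simps)
    next
      case 3
      then show ?thesis
        using nz by (auto intro!: derivative_eq_intros simp: f_def field_simps)
          (simp add: power2_eq_square power3_eq_cube power4_eq_xxxx algebra_simps)
    next
      case 4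
      then show ?thesis
        using nz by (auto intro!: derivative_eq_intros simp: f_def field_simps)
    qed
  qed
  from Maclaurin_bi_le[OF refl this] obtain t where "\<bar>t\<bar> \<le> \<bar>u\<bar>"
    and "ln (1 + u) = (\<Sum>m<4. f m 0 / fact m * u ^ m) + f 4 t / fact 4 * u ^ 4"
    by (auto simp: f_def)
  then show ?thesis
    using that by (simp add: f_def eval_nat_numeral fact_numeral)
qed

lemma ln_one_plus_taylor3:
  fixes u :: real
  assumes u: "\<bar>u\<bar> \<le> 1/2"
  shows "\<bar>ln (1 + u) - (u - u\<^sup>2 / 2 + u ^ 3 / 3)\<bar> \<le> 4 * u ^ 4"
proof -
  have "\<bar>u\<bar> < 1"
    using u by simp
  then obtain t where t: "\<bar>t\<bar> \<le> \<bar>u\<bar>"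
    and eq: "ln (1 + u) = u - u\<^sup>2 / 2 + u ^ 3 / 3 - u ^ 4 / (4 * (1 + t) ^ 4)"
    by (rule ln_one_plus_maclaurin3)
  have t_half: "1/2 \<le> 1 + t"
    using t u by linarith
  have "u ^ 4 / (4 * (1 + t) ^ 4) \<le> u ^ 4 / (4 * (1/2) ^ 4)"
    using t_half by (intro divide_left_mono mult_left_mono power_mono) auto
  then have "u ^ 4 / (4 * (1 + t) ^ 4) \<le> 4 * u ^ 4"
    by (simp add: power_divide)
  moreover have "0 \<le> u ^ 4 / (4 * (1 + t) ^ 4)"
    using t_half by simp
  ultimately show ?thesis
    using eq by (simp add: abs_le_iff)
qed

lemma ln_one_plus_taylor2:
  fixes u :: real
  assumes u: "\<bar>u\<bar> \<le> 1/2"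
  shows "\<bar>ln (1 + u) - (u - u\<^sup>2 / 2)\<bar> \<le> 3 * \<bar>u\<bar> ^ 3"
proof -
  have "u ^ 4 = \<bar>u\<bar> ^ 3 * \<bar>u\<bar>"
    by (simp flip: power_abs add: power4_eq_xxxx power3_eq_cube)
  also have "\<dots> \<le> \<bar>u\<bar> ^ 3 * (1/2)"
    using u by (intro mult_left_mono) auto
  finally have "u ^ 4 \<le> \<bar>u\<bar> ^ 3 / 2"
    by simp
  moreover have "\<bar>u ^ 3\<bar> = \<bar>u\<bar> ^ 3"
    by (simp add: power_abs)
  ultimately show ?thesis
    using ln_one_plus_taylor3[OF u] abs_ge_self[of "u ^ 3"] abs_ge_minus_self[of "u ^ 3"]
    unfolding abs_le_iff by linarith
qed

lemma exp_taylor1_bound: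
  fixes y :: real
  shows "\<bar>exp y - 1 - y\<bar> \<le> y\<^sup>2 * exp \<bar>y\<bar>"
proof -
  have "\<forall>m t. m < 2 \<and> \<bar>t\<bar> \<le> \<bar>y\<bar> \<longrightarrow> DERIV ((\<lambda>_::nat. exp) m) t :> (\<lambda>_::nat. exp) (Suc m) t"
    by (auto intro!: derivative_eq_intros)
  from Maclaurin_bi_le[OF refl this] obtain t where t: "\<bar>t\<bar> \<le> \<bar>y\<bar>"
    and eq: "exp y = (\<Sum>m<2. exp 0 / fact m * y ^ m) + exp t / fact 2 * y\<^sup>2"
    by auto
  have remainder: "exp y - 1 - y = exp t / 2 * y\<^sup>2"
    using eq by (simp add: eval_nat_numeral)
  have "\<bar>exp y - 1 - y\<bar> = exp t / 2 * y\<^sup>2"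
    unfolding remainder by (rule abs_of_nonneg) simp
  also have "\<dots> \<le> exp \<bar>y\<bar> * y\<^sup>2"
  proof (rule mult_right_mono)
    show "exp t / 2 \<le> exp \<bar>y\<bar>"
      using t exp_gt_zero[of t] exp_le_cancel_iff[of t "\<bar>y\<bar>"] by linarith
  qed simp
  finally show ?thesis
    by (simp add: mult.commute)
qed

lemma one_plus_sq_pow4_le_exp:
  fixes x :: real
  shows "(1 + x\<^sup>2) ^ 4 \<le> 65536 * exp (x\<^sup>2 / 4)"
proof -
  have "1 + x\<^sup>2 \<le> 16 * exp (x\<^sup>2 / 16)"
    using exp_ge_add_one_self[of "x\<^sup>2 / 16"] by linarith
  then have "(1 + x\<^sup>2) ^ 4 \<le> (16 * exp (x\<^sup>2 / 16)) ^ 4"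
    by (rule power_mono) simp
  also have "\<dots> = 65536 * exp (x\<^sup>2 / 4)"
    by (simp add: power_mult_distrib flip: exp_of_nat_mult)
  finally show ?thesis .
qed

lemma monomials_le_sq_one_plus_sq:
  fixes x :: real
  shows "1 \<le> (1 + x\<^sup>2)\<^sup>2" "\<bar>x\<bar> \<le> (1 + x\<^sup>2)\<^sup>2" "x\<^sup>2 \<le> (1 + x\<^sup>2)\<^sup>2"
    "\<bar>x\<bar> ^ 3 \<le> (1 + x\<^sup>2)\<^sup>2" "x ^ 4 \<le> (1 + x\<^sup>2)\<^sup>2"
proof -
  have expand: "(1 + x\<^sup>2)\<^sup>2 = 1 + 2 * x\<^sup>2 + x ^ 4"
    by (simp add: power2_eq_square power4_eq_xxxx algebra_simps)
  have nonneg: "0 \<le> x\<^sup>2" "0 \<le> x ^ 4"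
    by simp_all
  then show "1 \<le> (1 + x\<^sup>2)\<^sup>2" "x\<^sup>2 \<le> (1 + x\<^sup>2)\<^sup>2" "x ^ 4 \<le> (1 + x\<^sup>2)\<^sup>2"
    unfolding expand by linarith+
  have "(\<bar>x\<bar> - 1)\<^sup>2 = x\<^sup>2 - 2 * \<bar>x\<bar> + 1"
    "x\<^sup>2 * (\<bar>x\<bar> - 1)\<^sup>2 = x ^ 4 - 2 * \<bar>x\<bar> ^ 3 + x\<^sup>2"
    by (simp_all add: power2_eq_square power3_eq_cube power4_eq_xxxx algebra_simps flip: abs_mult)
  moreover have "0 \<le> (\<bar>x\<bar> - 1)\<^sup>2" "0 \<le> x\<^sup>2 * (\<bar>x\<bar> - 1)\<^sup>2"
    by simp_all
  ultimately show "\<bar>x\<bar> \<le> (1 + x\<^sup>2)\<^sup>2" "\<bar>x\<bar> ^ 3 \<le> (1 + x\<^sup>2)\<^sup>2"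
    using nonneg unfolding expand by linarith+
qed

section \<open>The two-term Edgeworth approximation\<close>

definition edgeworth_approx :: "real \<Rightarrow> real \<Rightarrow> real" where
  "edgeworth_approx s x =
     (1 / sqrt (2 * pi)) * exp (- x\<^sup>2 / 2) * (1 / s)
     - (1 / (6 * sqrt (2 * pi))) * x * (x\<^sup>2 - 3) * exp (- x\<^sup>2 / 2) * (1 / s\<^sup>2)"

lemma edgeworth_approx_factor:
  fixes s x :: real
  assumes "s \<noteq> 0"
  shows "edgeworth_approx s x
           = exp (- x\<^sup>2 / 2) / (sqrt (2 * pi) * s) * (1 + (x / (2 * s) - x ^ 3 / (6 * s)))"
  using assms by (simp add: edgeworth_approx_def field_simps power2_eq_square power3_eq_cube)

lemma exp_stirling_gaussian_factor:
  fixes s x d :: real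
  assumes "s > 0"
  shows "exp (- (ln (2 * pi) / 2) - ln s - x\<^sup>2 / 2 + d) = exp (- x\<^sup>2 / 2) / (sqrt (2 * pi) * s) * exp d"
proof -
  have "exp (ln (2 * pi) / 2) = (2 * pi) powr (1/2)"
    by (simp add: powr_def)
  then have "exp (ln (2 * pi) / 2) = sqrt (2 * pi)"
    by (simp add: powr_half_sqrt)
  then have "exp (- (ln (2 * pi) / 2)) = 1 / sqrt (2 * pi)" "exp (- ln s) = 1 / s"
    using assms by (simp_all add: exp_minus inverse_eq_divide)
  moreover have "exp (- (ln (2 * pi) / 2) - ln s - x\<^sup>2 / 2 + d)
                   = exp (- (ln (2 * pi) / 2)) * exp (- ln s) * exp (- x\<^sup>2 / 2) * exp d"
    by (simp flip: exp_add)
  ultimately show ?thesis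
    by simp
qed

lemma cubic_correction_bounds:
  fixes s x :: real
  assumes s: "s > 0"
  shows "\<bar>x / (2 * s) - x ^ 3 / (6 * s)\<bar> \<le> (1 + x\<^sup>2)\<^sup>2 / s"
    and "\<bar>x\<bar> \<le> s / 32 \<Longrightarrow> \<bar>x / (2 * s) - x ^ 3 / (6 * s)\<bar> \<le> x\<^sup>2 / 192 + 1/64"
proof -
  have tri: "\<bar>x / (2 * s) - x ^ 3 / (6 * s)\<bar> \<le> \<bar>x\<bar> / s / 2 + \<bar>x\<bar> ^ 3 / s / 6"
    using s abs_triangle_ineq4[of "x / (2 * s)" "x ^ 3 / (6 * s)"]
    by (simp add: abs_divide power_abs)
  have "\<bar>x\<bar> / s / 2 + \<bar>x\<bar> ^ 3 / s / 6 \<le> (1 + x\<^sup>2)\<^sup>2 / s / 2 + (1 + x\<^sup>2)\<^sup>2 / s / 6"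
    using s monomials_le_sq_one_plus_sq[of x] by (intro add_mono divide_right_mono) auto
  with tri show "\<bar>x / (2 * s) - x ^ 3 / (6 * s)\<bar> \<le> (1 + x\<^sup>2)\<^sup>2 / s"
    by simp
  assume x: "\<bar>x\<bar> \<le> s / 32"
  then have xs: "\<bar>x\<bar> / s \<le> 1/32"
    using s by (simp add: divide_le_eq)
  have "\<bar>x\<bar> ^ 3 / s = x\<^sup>2 * (\<bar>x\<bar> / s)"
    by (simp add: power3_eq_cube power2_eq_square abs_mult_self_eq mult.assoc)
  moreover have "x\<^sup>2 * (\<bar>x\<bar> / s) \<le> x\<^sup>2 * (1/32)"
    using xs by (intro mult_left_mono) simp_all
  ultimately have "\<bar>x\<bar> / s / 2 + \<bar>x\<bar> ^ 3 / s / 6 \<le> (1/32) / 2 + x\<^sup>2 * (1/32) / 6"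
    using xs by (simp only:) (intro add_mono divide_right_mono; simp)
  with tri show "\<bar>x / (2 * s) - x ^ 3 / (6 * s)\<bar> \<le> x\<^sup>2 / 192 + 1/64"
    by simp
qed

lemma remainder_scale_le_quadratic:
  fixes s x :: real
  assumes s: "s \<ge> 50" and x: "\<bar>x\<bar> \<le> s / 32"
  shows "40 * (1 + x\<^sup>2)\<^sup>2 / s\<^sup>2 \<le> 1/10 + x\<^sup>2 / 20"
proof -
  have "2500 \<le> s\<^sup>2"
    using power_mono[OF s, of 2] by simp
  have "x\<^sup>2 / s\<^sup>2 \<le> 1 / 1024"
  proof -
    have "(\<bar>x\<bar> / s)\<^sup>2 \<le> (1/32)\<^sup>2"
      using x s by (intro power_mono) (auto simp: divide_le_eq)
    then show ?thesis
      by (simp add: power_divide)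
  qed
  have "40 * (1 + x\<^sup>2)\<^sup>2 / s\<^sup>2 = 40 / s\<^sup>2 + 80 * (x\<^sup>2 / s\<^sup>2) + 40 * x\<^sup>2 * (x\<^sup>2 / s\<^sup>2)"
    using s by (simp add: field_simps power2_eq_square)
  also have "\<dots> \<le> 40 / 2500 + 80 * (1 / 1024) + 40 * x\<^sup>2 * (1 / 1024)"
  proof (intro add_mono)
    show "40 / s\<^sup>2 \<le> 40 / 2500"
      using \<open>2500 \<le> s\<^sup>2\<close> by (intro divide_left_mono) auto
    show "80 * (x\<^sup>2 / s\<^sup>2) \<le> 80 * (1 / 1024)"
      using \<open>x\<^sup>2 / s\<^sup>2 \<le> 1 / 1024\<close> by simp
    show "40 * x\<^sup>2 * (x\<^sup>2 / s\<^sup>2) \<le> 40 * x\<^sup>2 * (1 / 1024)"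
      using \<open>x\<^sup>2 / s\<^sup>2 \<le> 1 / 1024\<close> by (intro mult_left_mono) simp_all
  qed
  finally show ?thesis
    using zero_le_power2[of x] by linarith
qed

lemma sq_add_le_of_abs_bounds:
  fixes s Y d R :: real
  assumes s: "1 \<le> s" and d: "\<bar>d\<bar> \<le> Y / s" and R: "\<bar>R\<bar> \<le> 40 * Y / s\<^sup>2"
  shows "(d + R)\<^sup>2 \<le> 3202 * Y\<^sup>2 / s\<^sup>2"
proof -
  have s2: "1 \<le> s\<^sup>2"
    using s by (simp add: one_le_power)
  have "d\<^sup>2 \<le> (Y / s)\<^sup>2"
    using d by (metis abs_ge_zero power2_abs power_mono)
  moreover have "R\<^sup>2 \<le> (40 * Y / s\<^sup>2)\<^sup>2"
    using R by (metis abs_ge_zero power2_abs power_mono)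
  moreover have "(40 * Y / s\<^sup>2)\<^sup>2 \<le> 1600 * Y\<^sup>2 / s\<^sup>2"
  proof -
    have "(40 * Y / s\<^sup>2)\<^sup>2 = 1600 * Y\<^sup>2 / s\<^sup>2 * (1 / s\<^sup>2)"
      by (simp add: power_divide power_mult_distrib power2_eq_square)
    also have "\<dots> \<le> 1600 * Y\<^sup>2 / s\<^sup>2 * 1"
      using s2 by (intro mult_left_mono) (simp_all add: divide_le_eq)
    finally show ?thesis
      by simp
  qed
  moreover have "(d + R)\<^sup>2 \<le> 2 * d\<^sup>2 + 2 * R\<^sup>2"
    using zero_le_power2[of "d - R"] by (simp add: power2_eq_square algebra_simps)
  ultimately show ?thesis
    by (simp add: power_divide)
qed

lemma exp_second_order_error:
  fixes s x d R :: real
  assumes s: "s \<ge> 1"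
    and d: "\<bar>d\<bar> \<le> (1 + x\<^sup>2)\<^sup>2 / s"
    and R: "\<bar>R\<bar> \<le> 40 * (1 + x\<^sup>2)\<^sup>2 / s\<^sup>2"
    and dR: "\<bar>d + R\<bar> \<le> x\<^sup>2 / 4 + 1"
  shows "\<bar>exp (d + R) - 1 - d\<bar> \<le> 9700 * (1 + x\<^sup>2) ^ 4 * exp (x\<^sup>2 / 4) / s\<^sup>2"
proof -
  define Y where "Y = (1 + x\<^sup>2)\<^sup>2"
  have Y: "1 \<le> Y"
    unfolding Y_def by (rule monomials_le_sq_one_plus_sq)
  have dR2: "(d + R)\<^sup>2 \<le> 3202 * Y\<^sup>2 / s\<^sup>2"
    using s d R unfolding Y_def by (rule sq_add_le_of_abs_bounds)
  have "exp \<bar>d + R\<bar> \<le> exp 1 * exp (x\<^sup>2 / 4)"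
    using dR by (simp flip: exp_add)
  also have "\<dots> \<le> 3 * exp (x\<^sup>2 / 4)"
    using exp_le by (intro mult_right_mono) auto
  finally have exp_dR: "exp \<bar>d + R\<bar> \<le> 3 * exp (x\<^sup>2 / 4)" .
  have "\<bar>R\<bar> \<le> 40 * Y\<^sup>2 * exp (x\<^sup>2 / 4) / s\<^sup>2"
  proof -
    have "Y \<le> Y\<^sup>2"
      using Y by (simp add: power2_eq_square)
    also have "\<dots> \<le> Y\<^sup>2 * exp (x\<^sup>2 / 4)"
      using mult_left_mono[of 1 "exp (x\<^sup>2 / 4)" "Y\<^sup>2"] by simp
    finally have "40 * Y / s\<^sup>2 \<le> 40 * (Y\<^sup>2 * exp (x\<^sup>2 / 4)) / s\<^sup>2"
      by (intro divide_right_mono mult_left_mono) auto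
    with R[folded Y_def] show ?thesis
      by simp
  qed
  moreover have "(d + R)\<^sup>2 * exp \<bar>d + R\<bar> \<le> 3202 * Y\<^sup>2 / s\<^sup>2 * (3 * exp (x\<^sup>2 / 4))"
    using dR2 exp_dR by (intro mult_mono) auto
  then have "\<bar>exp (d + R) - 1 - (d + R)\<bar> \<le> 3202 * Y\<^sup>2 / s\<^sup>2 * (3 * exp (x\<^sup>2 / 4))"
    using exp_taylor1_bound[of "d + R"] by linarith
  ultimately have "\<bar>exp (d + R) - 1 - d\<bar> \<le> 3202 * Y\<^sup>2 / s\<^sup>2 * (3 * exp (x\<^sup>2 / 4)) + 40 * Y\<^sup>2 * exp (x\<^sup>2 / 4) / s\<^sup>2"
    by linarith
  also have "\<dots> = 9646 * Y\<^sup>2 * exp (x\<^sup>2 / 4) / s\<^sup>2"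
    by (simp add: field_simps)
  also have "\<dots> \<le> 9700 * Y\<^sup>2 * exp (x\<^sup>2 / 4) / s\<^sup>2"
    by (intro divide_right_mono mult_right_mono) auto
  finally show ?thesis
    by (simp add: Y_def flip: power_mult)
qed

text \<open>Both the exponential and the approximation carry the factor \<open>exp (-x\<^sup>2/2) / (\<surd>(2\<pi>) s)\<close>;
  what remains is \<open>exp (d + R) - 1 - d\<close>, whose growth in \<open>x\<close> that Gaussian factor absorbs.\<close>

lemma stirling_exp_edgeworth_error:
  fixes s x R :: real
  assumes s: "s \<ge> 50" and x: "\<bar>x\<bar> \<le> s / 32" and R: "\<bar>R\<bar> \<le> 40 * (1 + x\<^sup>2)\<^sup>2 / s\<^sup>2"
  shows "\<bar>exp (- (ln (2 * pi) / 2) - ln s - x\<^sup>2 / 2 + ((x / (2 * s) - x ^ 3 / (6 * s)) + R))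
           - edgeworth_approx s x\<bar> \<le> 2000000000 / s ^ 3"
proof -
  define d where "d = x / (2 * s) - x ^ 3 / (6 * s)"
  have s0: "s > 0"
    using s by simp
  have "\<bar>d + R\<bar> \<le> x\<^sup>2 / 4 + 1"
    using abs_triangle_ineq[of d R] cubic_correction_bounds(2)[OF s0 x]
      remainder_scale_le_quadratic[OF s x] R zero_le_power2[of x]
    unfolding d_def by linarith
  then have err: "\<bar>exp (d + R) - 1 - d\<bar> \<le> 9700 * (1 + x\<^sup>2) ^ 4 * exp (x\<^sup>2 / 4) / s\<^sup>2"
    using s R cubic_correction_bounds(1)[OF s0] unfolding d_def
    by (intro exp_second_order_error) auto
  have "edgeworth_approx s x = exp (- x\<^sup>2 / 2) / (sqrt (2 * pi) * s) * (1 + d)"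
    using edgeworth_approx_factor[of s x] s0 unfolding d_def by simp
  then have "exp (- (ln (2 * pi) / 2) - ln s - x\<^sup>2 / 2 + (d + R)) - edgeworth_approx s x
          = exp (- x\<^sup>2 / 2) / (sqrt (2 * pi) * s) * (exp (d + R) - 1 - d)"
    unfolding exp_stirling_gaussian_factor[OF s0] by (simp only: ring_distribs diff_diff_eq)
  then have "\<bar>exp (- (ln (2 * pi) / 2) - ln s - x\<^sup>2 / 2 + (d + R)) - edgeworth_approx s x\<bar>
          = exp (- x\<^sup>2 / 2) / (sqrt (2 * pi) * s) * \<bar>exp (d + R) - 1 - d\<bar>"
    using s0 by (simp add: abs_mult)
  also have "\<dots> \<le> exp (- x\<^sup>2 / 2) / s * (9700 * (65536 * exp (x\<^sup>2 / 4)) * exp (x\<^sup>2 / 4) / s\<^sup>2)"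
  proof (intro mult_mono)
    show "exp (- x\<^sup>2 / 2) / (sqrt (2 * pi) * s) \<le> exp (- x\<^sup>2 / 2) / s"
      using s0 pi_ge_two by (intro divide_left_mono) (auto simp: real_le_rsqrt)
    have "9700 * (1 + x\<^sup>2) ^ 4 * exp (x\<^sup>2 / 4) \<le> 9700 * (65536 * exp (x\<^sup>2 / 4)) * exp (x\<^sup>2 / 4)"
      using one_plus_sq_pow4_le_exp[of x] by (intro mult_right_mono mult_left_mono) auto
    then show "\<bar>exp (d + R) - 1 - d\<bar> \<le> 9700 * (65536 * exp (x\<^sup>2 / 4)) * exp (x\<^sup>2 / 4) / s\<^sup>2"
      using err by (meson divide_right_mono order_trans zero_le_power2)
  qed (use s0 in auto)
  also have "\<dots> = 9700 * 65536 * (exp (- x\<^sup>2 / 2) * (exp (x\<^sup>2 / 4) * exp (x\<^sup>2 / 4))) / s ^ 3"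
    by (simp add: field_simps power2_eq_square power3_eq_cube)
  also have "\<dots> \<le> 2000000000 / s ^ 3"
    using s0 by (simp add: divide_right_mono flip: exp_add)
  finally show ?thesis
    unfolding d_def .
qed

section \<open>The binomial mass near its mean\<close>

lemma ln_binomial_leading_terms:
  fixes K m n mu p s a t :: real
  assumes pos: "s > 0" "mu > 0" "p > 0" "K > 0" "1 - a > 0" "1 + t > 0"
    and m: "m = K * mu * (1 - a)" and n: "n = K * p * (1 + t)"
    and K: "K = m + n" and s: "s\<^sup>2 = K * mu * p"
  shows "(K + 1/2) * ln K - (n + 1/2) * ln n - (m + 1/2) * ln m + m * ln mu + n * ln p
           = - ln s - (m + 1/2) * ln (1 - a) - (n + 1/2) * ln (1 + t)"
proof -
  have "ln m = ln K + ln mu + ln (1 - a)" "ln n = ln K + ln p + ln (1 + t)"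
    unfolding m n using pos by (simp_all add: ln_mult)
  moreover have "2 * ln s = ln K + ln mu + ln p"
    using arg_cong[OF s, of ln] pos by (simp add: ln_mult power2_eq_square)
  ultimately show ?thesis
    by (simp add: K algebra_simps)
qed

text \<open>The Taylor polynomials of \<open>ln (1 - a)\<close> and \<open>ln (1 + t)\<close> produce the Gaussian exponent and the
  cubic correction (\<open>log_taylor_identity\<close>); the rest is \<open>O(1/s\<^sup>2)\<close> once \<open>\<mu> = O(1/s\<^sup>2)\<close>.\<close>

definition log_taylor_rest :: "real \<Rightarrow> real \<Rightarrow> real \<Rightarrow> real" where
  "log_taylor_rest s mu x =
     x ^ 3 * mu * (2 - mu) / (6 * s) - x * mu / s - x ^ 4 * (1 - mu) ^ 3 / (3 * s\<^sup>2)
     + x ^ 3 * mu\<^sup>2 / (2 * s) + x\<^sup>2 * (1 - mu)\<^sup>2 / (4 * s\<^sup>2) + x ^ 3 * (1 - mu) ^ 3 / (6 * s ^ 3)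
     + x\<^sup>2 * mu\<^sup>2 / (4 * s\<^sup>2)"

lemma log_taylor_identity:
  fixes s mu x p a t m n :: real
  assumes s: "s \<noteq> 0" and mu: "mu \<noteq> 0" and p: "p = 1 - mu" "p \<noteq> 0"
    and a: "a = x * p / s" and t: "t = x * mu / s"
    and m: "m = s\<^sup>2 / p - s * x" and n: "n = s\<^sup>2 / mu + s * x"
  shows "- (m + 1/2) * (- a - a\<^sup>2 / 2 - a ^ 3 / 3) - (n + 1/2) * (t - t\<^sup>2 / 2)
           = - x\<^sup>2 / 2 + (x / (2 * s) - x ^ 3 / (6 * s)) + log_taylor_rest s mu x"
proof -
  have ma: "m * a = s * x - s * x * a"
    using s p unfolding m a by (simp add: field_simps power2_eq_square)
  have nt: "n * t = s * x + s * x * t"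
    using s mu unfolding n t by (simp add: field_simps power2_eq_square)
  have at: "s * (a + t) = x"
    using s unfolding a t p by (simp add: field_simps)
  have "- (m + 1/2) * (- a - a\<^sup>2 / 2 - a ^ 3 / 3) - (n + 1/2) * (t - t\<^sup>2 / 2)
          = (m * a) * (1 + a / 2 + a\<^sup>2 / 3) - (n * t) * (1 - t / 2)
            + (a + a\<^sup>2 / 2 + a ^ 3 / 3) / 2 - (t - t\<^sup>2 / 2) / 2"
    by (simp add: field_simps power2_eq_square power3_eq_cube)
  also have "\<dots> = - (s * (a + t)) * x / 2 - s * x * a\<^sup>2 / 6 - s * x * a ^ 3 / 3 + s * x * t\<^sup>2 / 2
                  + (a - t) / 2 + a\<^sup>2 / 4 + a ^ 3 / 6 + t\<^sup>2 / 4"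
    unfolding ma nt by (simp add: field_simps power2_eq_square power3_eq_cube)
  also have "\<dots> = - x\<^sup>2 / 2 + (x / (2 * s) - x ^ 3 / (6 * s)) + log_taylor_rest s mu x"
  proof -
    have "x ^ 3 / (6 * s) - s * x * a\<^sup>2 / 6 = x ^ 3 * mu * (2 - mu) / (6 * s)"
      unfolding a p using s by (simp add: field_simps power2_eq_square power3_eq_cube)
    moreover have "(a - t) / 2 - x / (2 * s) = - x * mu / s"
      unfolding a t p using s by (simp add: field_simps)
    moreover have "s * x * a ^ 3 / 3 = x ^ 4 * (1 - mu) ^ 3 / (3 * s\<^sup>2)"
      unfolding a p using s by (simp add: field_simps power2_eq_square power3_eq_cube power4_eq_xxxx)
    moreover have "s * x * t\<^sup>2 / 2 = x ^ 3 * mu\<^sup>2 / (2 * s)"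
      unfolding t using s by (simp add: field_simps power2_eq_square power3_eq_cube)
    moreover have "a\<^sup>2 / 4 = x\<^sup>2 * (1 - mu)\<^sup>2 / (4 * s\<^sup>2)" "a ^ 3 / 6 = x ^ 3 * (1 - mu) ^ 3 / (6 * s ^ 3)"
      "t\<^sup>2 / 4 = x\<^sup>2 * mu\<^sup>2 / (4 * s\<^sup>2)"
      unfolding a t p by (simp_all add: power_divide power_mult_distrib)
    ultimately show ?thesis
      unfolding at log_taylor_rest_def by (simp add: power2_eq_square)
  qed
  finally show ?thesis .
qed

lemma log_taylor_rest_bound:
  fixes s mu x :: real
  assumes s: "1 \<le> s" and mu: "0 < mu" "mu \<le> 1" "mu * s\<^sup>2 \<le> 2"
  shows "\<bar>log_taylor_rest s mu x\<bar> \<le> 9 * (1 + x\<^sup>2)\<^sup>2 / s\<^sup>2"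
proof -
  define q where "q = mu * s\<^sup>2"
  define p where "p = 1 - mu"
  have q: "0 \<le> q" "q \<le> 2" and p: "0 \<le> p" "p \<le> 1"
    using mu unfolding q_def p_def by auto
  have coeff: "\<bar>y * c\<bar> \<le> K * \<bar>y\<bar>" if "0 \<le> c" "c \<le> K" for y c K :: real
    using that mult_left_mono[of c K "\<bar>y\<bar>"] by (simp add: abs_mult mult.commute)
  have triangle: "\<bar>a - b - c + d + e + f + g\<bar> \<le> \<bar>a\<bar> + \<bar>b\<bar> + \<bar>c\<bar> + \<bar>d\<bar> + \<bar>e\<bar> + \<bar>f\<bar> + \<bar>g\<bar>"
    for a b c d e f g :: real
    by arith
  have "log_taylor_rest s mu x * s\<^sup>2
          = x ^ 3 * (q * (1 + p) / (6 * s)) - x * (q / s) - x ^ 4 * (p ^ 3 / 3)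
            + x ^ 3 * (q * mu / (2 * s)) + x\<^sup>2 * (p\<^sup>2 / 4) + x ^ 3 * (p ^ 3 / (6 * s)) + x\<^sup>2 * (mu\<^sup>2 / 4)"
    using s unfolding log_taylor_rest_def q_def p_def
    by (simp add: field_simps power2_eq_square power3_eq_cube)
  then have "\<bar>log_taylor_rest s mu x\<bar> * s\<^sup>2
          = \<bar>x ^ 3 * (q * (1 + p) / (6 * s)) - x * (q / s) - x ^ 4 * (p ^ 3 / 3)
            + x ^ 3 * (q * mu / (2 * s)) + x\<^sup>2 * (p\<^sup>2 / 4) + x ^ 3 * (p ^ 3 / (6 * s)) + x\<^sup>2 * (mu\<^sup>2 / 4)\<bar>"
    by (metis abs_mult abs_power2)
  also have "\<dots> \<le> \<bar>x ^ 3 * (q * (1 + p) / (6 * s))\<bar> + \<bar>x * (q / s)\<bar> + \<bar>x ^ 4 * (p ^ 3 / 3)\<bar>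
            + \<bar>x ^ 3 * (q * mu / (2 * s))\<bar> + \<bar>x\<^sup>2 * (p\<^sup>2 / 4)\<bar> + \<bar>x ^ 3 * (p ^ 3 / (6 * s))\<bar>
            + \<bar>x\<^sup>2 * (mu\<^sup>2 / 4)\<bar>"
    by (rule triangle)
  also have "\<dots> \<le> 1 * \<bar>x ^ 3\<bar> + 2 * \<bar>x\<bar> + 1 * \<bar>x ^ 4\<bar> + 1 * \<bar>x ^ 3\<bar> + 1 * \<bar>x\<^sup>2\<bar>
                  + 1 * \<bar>x ^ 3\<bar> + 1 * \<bar>x\<^sup>2\<bar>"
  proof (intro add_mono coeff)
    show "q * (1 + p) / (6 * s) \<le> 1"
      using q p s mult_mono[of q 2 "1 + p" 2] by (simp add: divide_le_eq)
    show "q / s \<le> 2"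
      using q s by (simp add: divide_le_eq)
    show "q * mu / (2 * s) \<le> 1"
      using q mu s mult_mono[of q 2 mu 1] by (simp add: divide_le_eq)
    show "p ^ 3 / (6 * s) \<le> 1"
      using p s power_le_one[of p 3] by (simp add: divide_le_eq)
  qed (use p q mu s power_le_one[of p 3] power_le_one[of p 2] power_le_one[of mu 2] in auto)
  also have "\<dots> \<le> 9 * (1 + x\<^sup>2)\<^sup>2"
    using monomials_le_sq_one_plus_sq[of x] by (simp add: power_abs)
  finally show ?thesis
    using s by (simp add: abs_mult le_divide_eq)
qed

locale binomial_window =
  fixes N :: nat and mu s x :: real
  assumes s_ge: "50 \<le> s" and mu_pos: "0 < mu" and mu_le: "mu \<le> 2 / s\<^sup>2"
    and variance: "real N * mu * (1 - mu) = s\<^sup>2" and x_le: "\<bar>x\<bar> \<le> s / 32"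
begin

definition p :: real where "p = 1 - mu"
definition m :: real where "m = real N * mu - s * x"
definition n :: real where "n = real N - m"
definition a :: real where "a = x * p / s"
definition t :: real where "t = x * mu / s"

lemma s_pos: "0 < s"
  using s_ge by simp

lemma s_sq_ge: "2500 \<le> s\<^sup>2"
  using power_mono[OF s_ge, of 2] by simp

lemma mu_s_sq_le: "mu * s\<^sup>2 \<le> 2"
  using mu_le s_pos by (simp add: le_divide_eq)

lemma mu_small: "mu \<le> 1 / 1250"
proof -
  have "2 / s\<^sup>2 \<le> 2 / 2500"
    using s_sq_ge by (intro divide_left_mono) auto
  then show ?thesis
    using mu_le by simp
qed

lemma p_bounds: "1/2 \<le> p" "p \<le> 1"
  using mu_small mu_pos unfolding p_def by simp_all

lemma N_mu_p: "real N * mu * p = s\<^sup>2"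
  using variance unfolding p_def .

lemma x_over_s: "\<bar>x\<bar> / s \<le> 1/32"
  using x_le s_pos by (simp add: divide_le_eq)

lemma m_eq: "m = s\<^sup>2 / p - s * x" and n_eq: "n = s\<^sup>2 / mu + s * x"
proof -
  have "real N * mu = s\<^sup>2 / p" "real N * p = s\<^sup>2 / mu" "real N = real N * mu + real N * p"
    using N_mu_p p_bounds mu_pos by (auto simp: field_simps p_def)
  then show "m = s\<^sup>2 / p - s * x" "n = s\<^sup>2 / mu + s * x"
    unfolding m_def n_def by simp_all
qed

lemma m_alt: "m = real N * mu * (1 - a)" and n_alt: "n = real N * p * (1 + t)"
proof -
  have "real N * mu * a = s * x" "real N * p * t = s * x"
    using N_mu_p s_pos unfolding a_def t_def by (simp_all add: field_simps power2_eq_square)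
  then show "m = real N * mu * (1 - a)" "n = real N * p * (1 + t)"
    unfolding m_def n_def p_def by (simp_all add: algebra_simps)
qed

lemma a_le: "\<bar>a\<bar> \<le> \<bar>x\<bar> / s" and t_le: "\<bar>t\<bar> \<le> \<bar>x\<bar> / s"
  using s_pos p_bounds mu_pos mu_small
  by (auto simp: a_def t_def abs_mult abs_divide divide_right_mono mult_left_le)

lemma sx_le: "\<bar>s * x\<bar> \<le> s\<^sup>2 / 32"
  using x_le s_pos by (simp add: abs_mult power2_eq_square mult_left_mono)

lemma m_bounds: "s\<^sup>2 / 2 \<le> m" "m + 1/2 \<le> 3 * s\<^sup>2"
proof -
  have "s\<^sup>2 \<le> s\<^sup>2 / p" "s\<^sup>2 / p \<le> 2 * s\<^sup>2"
    using p_bounds s_pos by (auto simp: field_simps)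
  then show "s\<^sup>2 / 2 \<le> m" "m + 1/2 \<le> 3 * s\<^sup>2"
    unfolding m_eq using sx_le s_sq_ge by linarith+
qed

lemma n_bounds: "s\<^sup>2 / 2 \<le> n" "n + 1/2 \<le> 3 * (s\<^sup>2 / mu)"
proof -
  have "s\<^sup>2 \<le> s\<^sup>2 / mu"
    using mu_pos mu_small s_pos by (simp add: le_divide_eq)
  then show "s\<^sup>2 / 2 \<le> n" "n + 1/2 \<le> 3 * (s\<^sup>2 / mu)"
    unfolding n_eq using sx_le s_sq_ge by linarith+
qed

lemma N_ge: "s\<^sup>2 \<le> real N"
  using m_bounds(1) n_bounds(1) unfolding n_def by linarith

lemma bin_interp_eq_exp:
  "bin_interp N mu s x
     = exp (ln (Gamma (real N + 1)) - ln (Gamma (n + 1)) - ln (Gamma (m + 1)) + m * ln mu + n * ln p)"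
proof -
  have "m > 0" "n > 0" "real N > 0" "p > 0"
    using m_bounds(1) n_bounds(1) N_ge s_sq_ge p_bounds by linarith+
  moreover have "bin_interp N mu s x
                   = Gamma (real N + 1) / (Gamma (n + 1) * Gamma (m + 1)) * mu powr m * p powr n"
    by (simp add: bin_interp_def Let_def m_def n_def p_def)
  ultimately show ?thesis
    using mu_pos by (simp add: exp_add exp_diff powr_def mult.commute)
qed

lemma stirling_errors_bound:
  "\<bar>stirling_error (real N) - stirling_error n - stirling_error m\<bar> \<le> 1 / s\<^sup>2"
proof -
  have s2: "0 < s\<^sup>2"
    using s_pos by simp
  have "stirling_error (real N) \<le> 1 / (12 * s\<^sup>2)"
    using stirling_error_bounds(2)[of "real N"] N_ge s2 frac_le[of 1 1 "12 * s\<^sup>2" "12 * real N"]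
    by simp
  moreover have "stirling_error n \<le> 1 / (6 * s\<^sup>2)" "stirling_error m \<le> 1 / (6 * s\<^sup>2)"
    using stirling_error_bounds(2)[of n] stirling_error_bounds(2)[of m] m_bounds(1) n_bounds(1) s2
      frac_le[of 1 1 "6 * s\<^sup>2" "12 * n"] frac_le[of 1 1 "6 * s\<^sup>2" "12 * m"]
    by simp_all
  moreover have "0 < real N" "0 < n" "0 < m"
    using N_ge m_bounds(1) n_bounds(1) s2 by linarith+
  then have "0 \<le> stirling_error (real N)" "0 \<le> stirling_error n" "0 \<le> stirling_error m"
    by (simp_all add: stirling_error_bounds(1))
  moreover have "1 / (12 * s\<^sup>2) + 2 * (1 / (6 * s\<^sup>2)) \<le> 1 / s\<^sup>2"
    using s2 by (simp add: field_simps)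
  ultimately show ?thesis
    by (simp add: abs_le_iff)
qed

lemma taylor_remainder_m:
  "\<bar>(m + 1/2) * (ln (1 - a) - (- a - a\<^sup>2 / 2 - a ^ 3 / 3))\<bar> \<le> 12 * (1 + x\<^sup>2)\<^sup>2 / s\<^sup>2"
proof -
  have "\<bar>a\<bar> \<le> 1/2"
    using a_le x_over_s by linarith
  then have "\<bar>-a\<bar> \<le> 1/2"
    by simp
  from ln_one_plus_taylor3[OF this]
  have rem: "\<bar>ln (1 - a) - (- a - a\<^sup>2 / 2 - a ^ 3 / 3)\<bar> \<le> 4 * a ^ 4"
    by simp
  have "\<bar>a\<bar> ^ 4 \<le> (\<bar>x\<bar> / s) ^ 4"
    using a_le by (intro power_mono) auto
  then have a4: "a ^ 4 \<le> x ^ 4 / s ^ 4"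
    using s_pos by (simp add: power_divide power_abs abs_divide)
  have "\<bar>(m + 1/2) * (ln (1 - a) - (- a - a\<^sup>2 / 2 - a ^ 3 / 3))\<bar> \<le> (3 * s\<^sup>2) * (4 * (x ^ 4 / s ^ 4))"
  proof (unfold abs_mult, intro mult_mono)
    have "0 \<le> m + 1/2"
      using m_bounds(1) zero_le_power2[of s] by linarith
    then show "\<bar>m + 1/2\<bar> \<le> 3 * s\<^sup>2"
      using m_bounds(2) by simp
  qed (use rem a4 in auto)
  also have "\<dots> = 12 * x ^ 4 / s\<^sup>2"
    using s_pos by (simp add: field_simps power2_eq_square power4_eq_xxxx)
  also have "\<dots> \<le> 12 * (1 + x\<^sup>2)\<^sup>2 / s\<^sup>2"
    using monomials_le_sq_one_plus_sq(5)[of x] by (simp add: divide_right_mono)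
  finally show ?thesis .
qed

lemma taylor_remainder_n:
  "\<bar>(n + 1/2) * (ln (1 + t) - (t - t\<^sup>2 / 2))\<bar> \<le> 18 * (1 + x\<^sup>2)\<^sup>2 / s\<^sup>2"
proof -
  have "\<bar>t\<bar> \<le> 1/2"
    using t_le x_over_s by linarith
  from ln_one_plus_taylor2[OF this]
  have rem: "\<bar>ln (1 + t) - (t - t\<^sup>2 / 2)\<bar> \<le> 3 * \<bar>t\<bar> ^ 3" .
  have "s\<^sup>2 / mu * \<bar>t\<bar> ^ 3 = \<bar>x\<bar> ^ 3 * (mu * (mu * s\<^sup>2)) / s ^ 3"
    using s_pos mu_pos unfolding t_def
    by (simp add: abs_mult power_mult_distrib power_divide field_simps power2_eq_square power3_eq_cube)
  also have "\<dots> \<le> \<bar>x\<bar> ^ 3 * 2 / s ^ 3"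
    using mu_s_sq_le mu_small mu_pos s_pos mult_mono[of mu 1 "mu * s\<^sup>2" 2]
    by (intro divide_right_mono mult_left_mono) auto
  also have "\<dots> \<le> \<bar>x\<bar> ^ 3 * 2 / s\<^sup>2"
    using s_ge power_increasing[of 2 3 s] by (intro divide_left_mono) auto
  finally have t3: "s\<^sup>2 / mu * \<bar>t\<bar> ^ 3 \<le> \<bar>x\<bar> ^ 3 * 2 / s\<^sup>2" .
  have "\<bar>(n + 1/2) * (ln (1 + t) - (t - t\<^sup>2 / 2))\<bar> \<le> (3 * (s\<^sup>2 / mu)) * (3 * \<bar>t\<bar> ^ 3)"
  proof (unfold abs_mult, intro mult_mono)
    have "0 \<le> n + 1/2"
      using n_bounds(1) zero_le_power2[of s] by linarith
    then show "\<bar>n + 1/2\<bar> \<le> 3 * (s\<^sup>2 / mu)"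
      using n_bounds(2) by simp
  qed (use rem mu_pos in auto)
  also have "\<dots> \<le> 9 * (\<bar>x\<bar> ^ 3 * 2 / s\<^sup>2)"
    using t3 by simp
  also have "\<dots> \<le> 18 * (1 + x\<^sup>2)\<^sup>2 / s\<^sup>2"
    using monomials_le_sq_one_plus_sq(4)[of x] by (simp add: divide_right_mono)
  finally show ?thesis .
qed

definition expansion_rest :: real where
  "expansion_rest =
     log_taylor_rest s mu x
     - (m + 1/2) * (ln (1 - a) - (- a - a\<^sup>2 / 2 - a ^ 3 / 3))
     - (n + 1/2) * (ln (1 + t) - (t - t\<^sup>2 / 2))
     + (stirling_error (real N) - stirling_error n - stirling_error m)"

lemma ln_bin_interp_exponent:
  "ln (Gamma (real N + 1)) - ln (Gamma (n + 1)) - ln (Gamma (m + 1)) + m * ln mu + n * ln p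
     = - (ln (2 * pi) / 2) - ln s - x\<^sup>2 / 2 + ((x / (2 * s) - x ^ 3 / (6 * s)) + expansion_rest)"
proof -
  define E where "E = stirling_error (real N) - stirling_error n - stirling_error m"
  have pos: "0 < real N" "0 < p" "1 - a > 0" "1 + t > 0"
    using N_ge s_sq_ge p_bounds a_le t_le x_over_s by linarith+
  have N_split: "real N = m + n"
    by (simp add: n_def)
  have "ln (Gamma (real N + 1)) - ln (Gamma (n + 1)) - ln (Gamma (m + 1))
          = (real N + 1/2) * ln (real N) - (n + 1/2) * ln n - (m + 1/2) * ln m - ln (2 * pi) / 2 + E"
    unfolding E_def stirling_error_def by (simp add: N_split algebra_simps)
  then have "ln (Gamma (real N + 1)) - ln (Gamma (n + 1)) - ln (Gamma (m + 1)) + m * ln mu + n * ln p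
          = ((real N + 1/2) * ln (real N) - (n + 1/2) * ln n - (m + 1/2) * ln m + m * ln mu + n * ln p)
            - ln (2 * pi) / 2 + E"
    by linarith
  also have "(real N + 1/2) * ln (real N) - (n + 1/2) * ln n - (m + 1/2) * ln m + m * ln mu + n * ln p
               = - ln s - (m + 1/2) * ln (1 - a) - (n + 1/2) * ln (1 + t)"
    by (rule ln_binomial_leading_terms[OF s_pos mu_pos pos(2,1,3,4) m_alt n_alt N_split N_mu_p[symmetric]])
  also have "- ln s - (m + 1/2) * ln (1 - a) - (n + 1/2) * ln (1 + t)
               = - ln s + (- (m + 1/2) * (- a - a\<^sup>2 / 2 - a ^ 3 / 3) - (n + 1/2) * (t - t\<^sup>2 / 2))
                 - (m + 1/2) * (ln (1 - a) - (- a - a\<^sup>2 / 2 - a ^ 3 / 3))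
                 - (n + 1/2) * (ln (1 + t) - (t - t\<^sup>2 / 2))"
    by (simp add: field_simps)
  also have "- (m + 1/2) * (- a - a\<^sup>2 / 2 - a ^ 3 / 3) - (n + 1/2) * (t - t\<^sup>2 / 2)
               = - x\<^sup>2 / 2 + (x / (2 * s) - x ^ 3 / (6 * s)) + log_taylor_rest s mu x"
    using s_pos mu_pos p_bounds m_eq n_eq
    by (intro log_taylor_identity[OF _ _ p_def _ a_def t_def]) auto
  finally show ?thesis
    unfolding expansion_rest_def E_def by (simp add: algebra_simps)
qed

lemma expansion_rest_bound: "\<bar>expansion_rest\<bar> \<le> 40 * (1 + x\<^sup>2)\<^sup>2 / s\<^sup>2"
proof -
  have triangle: "\<bar>u - v - w + z\<bar> \<le> \<bar>u\<bar> + \<bar>v\<bar> + \<bar>w\<bar> + \<bar>z\<bar>" for u v w z :: real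
    by arith
  have "\<bar>expansion_rest\<bar>
          \<le> 9 * (1 + x\<^sup>2)\<^sup>2 / s\<^sup>2 + 12 * (1 + x\<^sup>2)\<^sup>2 / s\<^sup>2 + 18 * (1 + x\<^sup>2)\<^sup>2 / s\<^sup>2 + 1 / s\<^sup>2"
    unfolding expansion_rest_def using s_ge mu_pos mu_small mu_s_sq_le
    by (intro order_trans[OF triangle] add_mono log_taylor_rest_bound taylor_remainder_m
        taylor_remainder_n stirling_errors_bound) auto
  moreover have "1 / s\<^sup>2 \<le> (1 + x\<^sup>2)\<^sup>2 / s\<^sup>2"
    using monomials_le_sq_one_plus_sq(1)[of x] by (simp add: divide_right_mono)
  ultimately show ?thesis
    by (simp add: add_divide_distrib)
qed

lemma bin_interp_edgeworth_error:
  "\<bar>bin_interp N mu s x - edgeworth_approx s x\<bar> \<le> 2000000000 / s ^ 3"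
  using stirling_exp_edgeworth_error[OF s_ge x_le expansion_rest_bound]
  unfolding bin_interp_eq_exp ln_bin_interp_exponent .

end

lemma mu_le_of_mean_bound:
  fixes K mu s :: real
  assumes mu: "0 < mu" "mu < 1" and s: "0 < s"
    and variance: "K * mu * (1 - mu) = s\<^sup>2" and mean: "K * mu \<le> s\<^sup>2 + 2"
  shows "mu \<le> 2 / s\<^sup>2"
proof -
  have "0 < K * mu * (1 - mu)"
    using variance s by simp
  then have "0 < K * mu"
    using mu by (simp add: zero_less_mult_iff)
  then have "s\<^sup>2 \<le> K * mu"
    using variance mu mult_left_le[of "1 - mu" "K * mu"] by simp
  then have "mu * s\<^sup>2 \<le> mu * (K * mu)"
    using mu by (intro mult_left_mono) auto
  also have "\<dots> = K * mu - s\<^sup>2"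
    by (simp add: variance[symmetric] algebra_simps)
  also have "\<dots> \<le> 2"
    using mean by simp
  finally show ?thesis
    using s by (simp add: le_divide_eq)
qed

lemma abs_le_powr_window:
  fixes alpha s x :: real
  assumes alpha: "0 < alpha" and s: "32 powr (1 / alpha) < s" and x: "\<bar>x\<bar> \<le> s powr (1 - alpha)"
  shows "\<bar>x\<bar> \<le> s / 32"
proof -
  have s0: "0 < s"
    using s powr_gt_zero[of 32 "1 / alpha"] by linarith
  have "32 = (32 powr (1 / alpha)) powr alpha"
    using alpha by (simp add: powr_powr)
  also have "\<dots> < s powr alpha"
    using s alpha by (intro powr_less_mono2) auto
  finally have "s / s powr alpha \<le> s / 32"
    using s0 by (intro divide_left_mono) auto
  moreover have "s powr (1 - alpha) = s / s powr alpha"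
    using s0 by (simp add: powr_diff)
  ultimately show ?thesis
    using x by linarith
qed

lemma binomial_window_of_mean_asymp:
  fixes N :: nat and mu s x C alpha :: real
  assumes mu: "0 < mu" "mu < 1" and sigma: "s = sqrt (real N * mu * (1 - mu))"
    and mean: "\<bar>real N * mu - (s\<^sup>2 + 1)\<bar> \<le> C / s\<^sup>2"
    and s: "50 \<le> s" "sqrt \<bar>C\<bar> < s" "32 powr (1 / alpha) < s"
    and alpha: "0 < alpha" and x: "\<bar>x\<bar> \<le> s powr (1 - alpha)"
  shows "binomial_window N mu s x"
proof
  have "0 \<le> real N * mu * (1 - mu)"
    using mu by simp
  then show variance: "real N * mu * (1 - mu) = s\<^sup>2"
    using sigma by (metis real_sqrt_pow2)
  have "sqrt \<bar>C\<bar> ^ 2 < s\<^sup>2"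
    using s(2) by (intro power_strict_mono) auto
  then have "C / s\<^sup>2 \<le> 1"
    using s(1) by (simp add: divide_le_eq)
  then have "real N * mu \<le> s\<^sup>2 + 2"
    using mean by linarith
  then show "mu \<le> 2 / s\<^sup>2"
    using mu s(1) variance by (intro mu_le_of_mean_bound) auto
  show "\<bar>x\<bar> \<le> s / 32"
    using alpha s(3) x by (rule abs_le_powr_window)
qed (use mu s(1) in auto)

theorem proposition2p2:
  fixes Sigma :: "real set" and N :: "real \<Rightarrow> nat" and mu :: "real \<Rightarrow> real" and alpha :: real
  assumes Sigma_pos: "Sigma \<subseteq> {0<..}"
    and Sigma_unbounded: "\<not> bdd_above Sigma"
    and N_pos: "\<And>s. s \<in> Sigma \<Longrightarrow> N s > 0"
    and mu_range: "\<And>s. s \<in> Sigma \<Longrightarrow> 0 < mu s \<and> mu s < 1"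
    and sigma_eq: "\<And>s. s \<in> Sigma \<Longrightarrow> s = sqrt (real (N s) * mu s * (1 - mu s))"
    and E_asymp: "\<exists>C s1. \<forall>s\<in>Sigma. s > s1 \<longrightarrow> \<bar>real (N s) * mu s - (s\<^sup>2 + 1)\<bar> \<le> C / s\<^sup>2"
    and alpha_pos: "alpha > 0"
  shows "\<exists>C > 0. \<exists>s0. \<forall>s\<in>Sigma. s > s0 \<longrightarrow> (\<forall>x. \<bar>x\<bar> \<le> s powr (1 - alpha) \<longrightarrow>
           \<bar>bin_interp (N s) (mu s) s x
             - ((1 / sqrt (2 * pi)) * exp (- x\<^sup>2 / 2) * (1 / s)
                - (1 / (6 * sqrt (2 * pi))) * x * (x\<^sup>2 - 3) * exp (- x\<^sup>2 / 2) * (1 / s\<^sup>2))\<bar>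
           \<le> C / s ^ 3)"
proof -
  obtain C s1 where C: "\<forall>s\<in>Sigma. s > s1 \<longrightarrow> \<bar>real (N s) * mu s - (s\<^sup>2 + 1)\<bar> \<le> C / s\<^sup>2"
    using E_asymp by blast
  define s0 where "s0 = max (max 50 s1) (max (sqrt \<bar>C\<bar>) (32 powr (1 / alpha)))"
  have "\<bar>bin_interp (N s) (mu s) s x - edgeworth_approx s x\<bar> \<le> 2000000000 / s ^ 3"
    if "s \<in> Sigma" "s > s0" "\<bar>x\<bar> \<le> s powr (1 - alpha)" for s x
  proof (rule binomial_window.bin_interp_edgeworth_error)
    show "binomial_window (N s) (mu s) s x"
      using that mu_range sigma_eq C alpha_pos unfolding s0_def
      by (intro binomial_window_of_mean_asymp[where C = C and alpha = alpha]) auto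
  qed
  then show ?thesis
    unfolding edgeworth_approx_def by (intro exI[of _ "2000000000::real"] exI[of _ s0]) auto
qed

end
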